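(* Assume Case 2 holds, $d=0$ and $\delta<T_{s-1}$. Then for every $n\ge1$, $Q^n$ contains the term $z^{\gamma_n}$ (where $\gamma_n=\gamma\delta^{n-1}$), and $w_l(Q^n)=\gamma_n$ for every $l\in[l_1,\alpha]$. Moreover, for every $n\ge2$, either $N(Q^n)=\{(x,y):x\ge\gamma_n,y\ge0\}$, or the edge of $N(Q^n)$ whose right endpoint is the vertex $(\gamma_n,0)$ has slope strictly less than $-l_1^{-1}$ (i.e. it is strictly steeper than the edge of $N(q)$ ending at $(\gamma,0)$).
   Context: Let $f(z,w)=(p(z),q(z,w))$ be a holomorphic skew product germ at the origin of $\mathbb{C}^2$ with $f(0,0)=(0,0)$, where $p(z)=a_\delta z^\delta+O(z^{\delta+1})$ with $a_\delta\neq0$ and integer $\delta\ge1$, and $q(z,w)=\sum_{i+j\ge1}b_{ij}z^iw^j$ is not identically zero. For $n\ge1$ write $f^n=(p^n,Q^n)$. For a nonzero germ $g=\sum g_{ij}z^iw^j$, say $g$ contains $z^aw^b$ if $g_{ab}\ne0$, and for real $l>0$ let $w_l(g)=\min\{i+lj: g_{ij}\neq0\}$. The Newton polygon $N(g)$ is the convex hull of $\bigcup_{g_{ij}\neq0}\{(x,y):x\ge i,\ y\ge j\}$. Let $(n_1,m_1),\dots,(n_s,m_s)$ be the vertices of $N(q)$ with $n_1<\cdots<n_s$, $m_1>\cdots>m_s$; for $1\le k\le s-1$ let $T_k$ be the $y$-intercept of the line through $(n_k,m_k)$ and $(n_{k+1},m_{k+1})$. Case 2 means: $s>1$ and $\delta\le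 T_{s-1}$; set $(\gamma,d)=(n_s,m_s)$ and $l_1=\frac{n_s-n_{s-1}}{m_{s-1}-m_s}$. Let $\alpha=\gamma/(\delta-d)$. *)

theory Defs
  imports "HOL-Analysis.Analysis"
begin

text \<open>A one-variable series is  nat => complex  (coefficient of z^i);
  a two-variable series is  nat => nat => complex  (coefficient g i j of z^i w^j).\<close>

type_synonym ser1 = "nat \<Rightarrow> complex"
type_synonym ser2 = "nat \<Rightarrow> nat \<Rightarrow> complex"

text \<open>Convergence near the origin (holomorphic germ) via Cauchy-type coefficient bounds.\<close>
definition convergent1 :: "ser1 \<Rightarrow> bool" where
  "convergent1 g \<longleftrightarrow> (\<exists>C r::real. \<forall>i. norm (g i) \<le> C * r ^ i)"

definition convergent2 :: "ser2 \<Rightarrow> bool" where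
  "convergent2 g \<longleftrightarrow> (\<exists>C r::real. \<forall>i j. norm (g i j) \<le> C * r ^ (i + j))"

definition mul1 :: "ser1 \<Rightarrow> ser1 \<Rightarrow> ser1" where
  "mul1 f g = (\<lambda>a. \<Sum>i\<le>a. f i * g (a - i))"

fun pow1 :: "ser1 \<Rightarrow> nat \<Rightarrow> ser1" where
  "pow1 f 0 = (\<lambda>a. if a = 0 then 1 else 0)"
| "pow1 f (Suc n) = mul1 f (pow1 f n)"

definition mul2 :: "ser2 \<Rightarrow> ser2 \<Rightarrow> ser2" where
  "mul2 f g = (\<lambda>a b. \<Sum>i\<le>a. \<Sum>j\<le>b. f i j * g (a - i) (b - j))"

fun pow2 :: "ser2 \<Rightarrow> nat \<Rightarrow> ser2" where
  "pow2 f 0 = (\<lambda>a b. if a = 0 \<and> b = 0 then 1 else 0)"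
| "pow2 f (Suc n) = mul2 f (pow2 f n)"

definition lift :: "ser1 \<Rightarrow> ser2" where
  "lift P = (\<lambda>a b. if b = 0 then P a else 0)"

text \<open>Formal composition g(P(z)), valid when P(0) = 0 (then only i \<le> a contributes).\<close>
definition comp1 :: "ser1 \<Rightarrow> ser1 \<Rightarrow> ser1" where
  "comp1 g P = (\<lambda>a. \<Sum>i\<le>a. g i * pow1 P i a)"

text \<open>Formal composition g(P(z), R(z,w)), valid when P(0) = 0 and R(0,0) = 0
  (then only terms with i + j \<le> a + b contribute to the coefficient of z^a w^b).\<close>
definition comp2 :: "ser2 \<Rightarrow> ser1 \<Rightarrow> ser2 \<Rightarrow> ser2" where
  "comp2 g P R = (\<lambda>a b. \<Sum>i\<le>a + b. \<Sum>j\<le>a + b - i.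
       g i j * mul2 (pow2 (lift P) i) (pow2 R j) a b)"

text \<open>Iterates f^n = (p^n, Q^n) of the skew product f = (p, q);
  f^0 = identity, f^(n+1) = f o f^n.\<close>
fun piter :: "ser1 \<Rightarrow> nat \<Rightarrow> ser1" where
  "piter p 0 = (\<lambda>a. if a = 1 then 1 else 0)"
| "piter p (Suc n) = comp1 p (piter p n)"

fun Qiter :: "ser1 \<Rightarrow> ser2 \<Rightarrow> nat \<Rightarrow> ser2" where
  "Qiter p q 0 = (\<lambda>a b. if a = 0 \<and> b = 1 then 1 else 0)"
| "Qiter p q (Suc n) = comp2 q (piter p n) (Qiter p q n)"

definition wl :: "real \<Rightarrow> ser2 \<Rightarrow> real" where
  "wl l g = Inf {real i + l * real j | i j. g i j \<noteq> 0}"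

definition newton :: "ser2 \<Rightarrow> (real \<times> real) set" where
  "newton g = convex hull (\<Union>{ {(x, y). real i \<le> x \<and> real j \<le> y} | i j. g i j \<noteq> 0})"

definition newton_vertices :: "ser2 \<Rightarrow> (real \<times> real) set" where
  "newton_vertices g = {v. v extreme_point_of newton g}"

end

theory Submission
  imports Defs
begin

(* Put l = l_1.  Since delta < T_(s-1), the vertex (gamma, 0) is the unique point of the support
   of q minimising delta i + gamma j.  In Q^(n+1) = q(p^n, Q^n) the monomial z^i w^j of q only
   produces terms of w_l-weight at least i delta^n + j gamma delta^(n-1), which exceeds
   gamma delta^n unless (i, j) = (gamma, 0); and z^gamma contributes c z^(gamma delta^n), c <> 0,
   and nothing off the z-axis.  Hence, by induction, w_l(Q^n) = gamma delta^(n-1) is attained at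
   z^(gamma delta^(n-1)), and for n >= 2 every monomial off the z-axis lies strictly above the
   line of slope -1/l through (gamma delta^(n-1), 0), which forces the edge of N(Q^n) ending at
   that vertex to be steeper than -1/l. *)

section \<open>Monomials and orders of vanishing\<close>

definition monom2 :: "nat \<Rightarrow> nat \<Rightarrow> ser2" where
  "monom2 i j = (\<lambda>a b. if a = i \<and> b = j then 1 else 0)"

lemma mul2_monom2_right:
  "mul2 f (monom2 i j) a b = (if i \<le> a \<and> j \<le> b then f (a - i) (b - j) else 0)"
proof (cases "i \<le> a \<and> j \<le> b")
  case True
  have "mul2 f (monom2 i j) a b =
      (\<Sum>x\<le>a. \<Sum>y\<le>b. if y = b - j then if x = a - i then f x y else 0 else 0)"
    unfolding mul2_def monom2_def using True by (intro sum.cong refl) auto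
  then show ?thesis
    using True by simp
next
  case False
  then show ?thesis
    unfolding mul2_def monom2_def by (auto intro!: sum.neutral)
qed

lemma mul2_monom2: "mul2 (monom2 i j) (monom2 i' j') = monom2 (i + i') (j + j')"
  by (simp add: fun_eq_iff mul2_monom2_right) (auto simp: monom2_def)

lemma pow2_0_eq_monom2: "pow2 f 0 = monom2 0 0"
  by (simp add: monom2_def)

lemma pow2_monom2: "pow2 (monom2 i j) n = monom2 (n * i) (n * j)"
  by (induction n) (simp_all add: monom2_def[of 0 0, symmetric] mul2_monom2)

lemma mul2_pow2_0_right: "mul2 f (pow2 g 0) = f"
  by (simp only: pow2_0_eq_monom2 fun_eq_iff mul2_monom2_right) simp

lemma mul2_lift: "mul2 (lift f) (lift g) = lift (mul1 f g)"
  by (auto simp: fun_eq_iff mul2_def lift_def mul1_def intro!: sum.neutral)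

lemma pow2_lift: "pow2 (lift P) n = lift (pow1 P n)"
proof (induction n)
  case 0
  then show ?case by (auto simp: fun_eq_iff lift_def)
qed (simp add: mul2_lift)

lemma Qiter_1: "Qiter p q 1 = q"
proof (intro ext)
  fix a b
  have "lift (piter p 0) = monom2 1 0" "Qiter p q 0 = monom2 0 1"
    by (auto simp: fun_eq_iff lift_def monom2_def)
  then have "Qiter p q 1 a b = (\<Sum>i\<le>a + b. \<Sum>j\<le>a + b - i. q i j * monom2 i j a b)"
    by (simp add: comp2_def pow2_monom2 mul2_monom2)
  also have "\<dots> = (\<Sum>i\<le>a + b. if i = a then \<Sum>j\<le>a + b - i. if j = b then q i j else 0 else 0)"
    by (intro sum.cong refl) (simp add: monom2_def if_distrib[of "\<lambda>x. _ * x"] cong: if_cong)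
  also have "\<dots> = q a b"
    by simp
  finally show "Qiter p q 1 a b = q a b" .
qed

lemma mul1_low_coeffs:
  assumes f: "\<forall>a<d. f a = 0" and g: "\<forall>a<e. g a = 0"
  shows "\<forall>a<d + e. mul1 f g a = 0" and "mul1 f g (d + e) = f d * g e"
proof -
  have term_zero: "f i * g (a - i) = 0" if "i \<le> a" "a \<le> d + e" "i \<noteq> d \<or> a < d + e" for a i
    using f g that by (cases "i < d") auto
  show "\<forall>a<d + e. mul1 f g a = 0"
    by (auto simp: mul1_def term_zero intro!: sum.neutral)
  have "mul1 f g (d + e) = (\<Sum>i\<le>d + e. if i = d then f d * g e else 0)"
    unfolding mul1_def by (intro sum.cong refl) (auto simp: term_zero)
  then show "mul1 f g (d + e) = f d * g e"
    by simp
qed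

lemma pow1_low_coeffs:
  assumes "\<forall>a<e. P a = 0"
  shows "(\<forall>a<n * e. pow1 P n a = 0) \<and> pow1 P n (n * e) = P e ^ n"
proof (induction n)
  case (Suc n)
  then show ?case
    using mul1_low_coeffs[OF assms, of "n * e" "pow1 P n"] by simp
qed simp

lemma comp1_low_coeffs:
  assumes p: "\<forall>a<d. p a = 0" and P: "\<forall>a<e. P a = 0" "1 \<le> e"
  shows "\<forall>a<d * e. comp1 p P a = 0" and "comp1 p P (d * e) = p d * P e ^ d"
proof -
  have term_zero: "p i * pow1 P i a = 0" if "a \<le> d * e" "i \<noteq> d \<or> a < d * e" for a i
  proof (cases "i < d")
    case False
    have "a < i * e"
    proof (cases "i = d")
      case False
      with \<open>\<not> i < d\<close> P(2) have "d * e < i * e" by simp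
      with that(1) show ?thesis by linarith
    qed (use that in simp)
    then show ?thesis
      using pow1_low_coeffs[OF P(1), of i] by simp
  qed (use p in simp)
  show "\<forall>a<d * e. comp1 p P a = 0"
    by (auto simp: comp1_def term_zero intro!: sum.neutral)
  have "comp1 p P (d * e) = (\<Sum>i\<le>d * e. if i = d then p d * P e ^ d else 0)"
    unfolding comp1_def
    by (intro sum.cong refl) (auto simp: term_zero pow1_low_coeffs[OF P(1)])
  then show "comp1 p P (d * e) = p d * P e ^ d"
    using P(2) by simp
qed

lemma piter_low_coeffs:
  assumes "\<forall>a<\<delta>. p a = 0" "p \<delta> \<noteq> 0" "1 \<le> \<delta>"
  shows "(\<forall>a<\<delta> ^ k. piter p k a = 0) \<and> piter p k (\<delta> ^ k) \<noteq> 0"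
proof (induction k)
  case (Suc k)
  have "1 \<le> \<delta> ^ k"
    using assms(3) by simp
  then show ?case
    using comp1_low_coeffs[OF assms(1), where P = "piter p k" and e = "\<delta> ^ k"] Suc assms(2) by simp
qed simp

section \<open>Weighted orders of the iterates\<close>

definition wl_ge :: "real \<Rightarrow> real \<Rightarrow> ser2 \<Rightarrow> bool" where
  "wl_ge l c g \<longleftrightarrow> (\<forall>a b. g a b \<noteq> 0 \<longrightarrow> c \<le> real a + l * real b)"

definition wl_gt_off_axis :: "real \<Rightarrow> nat \<Rightarrow> ser2 \<Rightarrow> bool" where
  "wl_gt_off_axis l N g \<longleftrightarrow>
     (\<forall>a b. g a b \<noteq> 0 \<longrightarrow> (b = 0 \<and> N \<le> a) \<or> real N < real a + l * real b)"

lemma wl_gt_off_axis_imp_wl_ge: "wl_gt_off_axis l N g \<Longrightarrow> wl_ge l (real N) g"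
  by (fastforce simp: wl_gt_off_axis_def wl_ge_def)

lemma wl_ge_mono: "wl_ge l' c g \<Longrightarrow> l' \<le> l \<Longrightarrow> wl_ge l c g"
  unfolding wl_ge_def by (meson add_left_mono mult_right_mono of_nat_0_le_iff order_trans)

lemma wl_eq_of_axis_coeff: "wl_ge l (real N) g \<Longrightarrow> g N 0 \<noteq> 0 \<Longrightarrow> wl l g = real N"
  unfolding wl_def wl_ge_def by (rule cInf_eq_minimum) force+

lemma wl_ge_mul2:
  assumes "wl_ge l A f" "wl_ge l B g"
  shows "wl_ge l (A + B) (mul2 f g)"
  unfolding wl_ge_def
proof (intro allI impI)
  fix a b assume "mul2 f g a b \<noteq> 0"
  then obtain i j where ij: "i \<le> a" "j \<le> b" "f i j * g (a - i) (b - j) \<noteq> 0"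
    unfolding mul2_def by (meson atMost_iff sum.not_neutral_contains_not_neutral)
  then have "A \<le> real i + l * real j" "B \<le> real (a - i) + l * real (b - j)"
    using assms unfolding wl_ge_def by (metis mult_zero_left mult_zero_right)+
  then show "A + B \<le> real a + l * real b"
    using ij(1,2) by (simp add: of_nat_diff algebra_simps)
qed

lemma wl_ge_pow2: "wl_ge l A f \<Longrightarrow> wl_ge l (real n * A) (pow2 f n)"
proof (induction n)
  case 0
  then show ?case by (simp add: wl_ge_def)
next
  case (Suc n)
  then show ?case
    using wl_ge_mul2[of l A f "real n * A" "pow2 f n"] by (simp add: algebra_simps)
qed

lemma wl_ge_lift: "\<forall>a<e. P a = 0 \<Longrightarrow> wl_ge l (real e) (lift P)"
  by (auto simp: wl_ge_def lift_def not_less)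

lemma comp2_nonzero_term:
  assumes "comp2 q P R a b \<noteq> 0"
  obtains i j where "q i j \<noteq> 0" "mul2 (pow2 (lift P) i) (pow2 R j) a b \<noteq> 0"
  using assms unfolding comp2_def
  by (metis (no_types, lifting) mult_not_zero sum.not_neutral_contains_not_neutral)

lemma comp2_axis_term: "mul2 (pow2 (lift P) i) (pow2 R 0) = lift (pow1 P i)"
  by (simp only: mul2_pow2_0_right pow2_lift)

lemma comp2_off_axis_term_wl_gt:
  fixes l :: real and g :: nat
  assumes q: "wl_gt_off_axis (real \<gamma> / real \<delta>) \<gamma> q"
    and P: "\<forall>a<e. P a = 0" and R: "wl_ge l (real g) R"
    and pos: "0 < e" "0 < \<delta>" and rel: "\<gamma> * e = \<delta> * g"
    and ij: "q i j \<noteq> 0" "(i, j) \<noteq> (\<gamma>, 0)"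
    and nz: "mul2 (pow2 (lift P) i) (pow2 R j) a b \<noteq> 0"
  shows "real (\<gamma> * e) < real a + l * real b"
proof -
  have "real \<gamma> < real i + real \<gamma> / real \<delta> * real j"
    using q ij unfolding wl_gt_off_axis_def by fastforce
  then have "real e * \<gamma> < real e * (real i + real \<gamma> / real \<delta> * real j)"
    using pos by simp
  also have "\<dots> = real i * e + real j * g"
    using arg_cong[OF rel, of real] pos by (simp add: field_simps)
  finally have "real (\<gamma> * e) < real i * e + real j * g"
    by (simp add: ac_simps)
  also have "\<dots> \<le> real a + l * real b"
    using wl_ge_mul2[OF wl_ge_pow2[OF wl_ge_lift[OF P]] wl_ge_pow2[OF R], of i j] nz
    by (auto simp: wl_ge_def)
  finally show ?thesis .
qed

lemma comp2_wl_gt_off_axis: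
  fixes l :: real and g :: nat
  assumes q: "wl_gt_off_axis (real \<gamma> / real \<delta>) \<gamma> q"
    and P: "\<forall>a<e. P a = 0" and R: "wl_ge l (real g) R"
    and pos: "0 < e" "0 < \<delta>" and rel: "\<gamma> * e = \<delta> * g"
  shows "wl_gt_off_axis l (\<gamma> * e) (comp2 q P R)"
  unfolding wl_gt_off_axis_def
proof (intro allI impI)
  fix a b assume "comp2 q P R a b \<noteq> 0"
  then obtain i j where ij: "q i j \<noteq> 0" and nz: "mul2 (pow2 (lift P) i) (pow2 R j) a b \<noteq> 0"
    by (rule comp2_nonzero_term)
  show "(b = 0 \<and> \<gamma> * e \<le> a) \<or> real (\<gamma> * e) < real a + l * real b"
  proof (cases "(i, j) = (\<gamma>, 0)")
    case True
    then have axis: "i = \<gamma>" "j = 0" by simp_all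
    have "lift (pow1 P \<gamma>) a b \<noteq> 0"
      using nz unfolding axis comp2_axis_term .
    then have "b = 0" "pow1 P \<gamma> a \<noteq> 0"
      by (auto simp: lift_def split: if_splits)
    then show ?thesis
      using pow1_low_coeffs[OF P, of \<gamma>] by (meson not_less)
  next
    case False
    then show ?thesis
      using comp2_off_axis_term_wl_gt[OF q P R pos rel ij False nz] by blast
  qed
qed

lemma comp2_axis_coeff:
  fixes l :: real and g :: nat
  assumes q: "wl_gt_off_axis (real \<gamma> / real \<delta>) \<gamma> q"
    and P: "\<forall>a<e. P a = 0" and R: "wl_ge l (real g) R"
    and pos: "0 < e" "0 < \<delta>" and rel: "\<gamma> * e = \<delta> * g"
  shows "comp2 q P R (\<gamma> * e) 0 = q \<gamma> 0 * P e ^ \<gamma>"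
proof -
  have "q i j * mul2 (pow2 (lift P) i) (pow2 R j) (\<gamma> * e) 0
      = (if i = \<gamma> then if j = 0 then q \<gamma> 0 * P e ^ \<gamma> else 0 else 0)" for i j
  proof (cases "(i, j) = (\<gamma>, 0)")
    case True
    then have axis: "i = \<gamma>" "j = 0" by simp_all
    have "mul2 (pow2 (lift P) i) (pow2 R j) (\<gamma> * e) 0 = pow1 P \<gamma> (\<gamma> * e)"
      unfolding axis comp2_axis_term by (simp add: lift_def)
    then show ?thesis
      using True pow1_low_coeffs[OF P, of \<gamma>] by simp
  next
    case False
    have "q i j * mul2 (pow2 (lift P) i) (pow2 R j) (\<gamma> * e) 0 = 0"
    proof (rule ccontr)
      assume "q i j * mul2 (pow2 (lift P) i) (pow2 R j) (\<gamma> * e) 0 \<noteq> 0"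
      then have "q i j \<noteq> 0" "mul2 (pow2 (lift P) i) (pow2 R j) (\<gamma> * e) 0 \<noteq> 0"
        by auto
      from comp2_off_axis_term_wl_gt[OF q P R pos rel this(1) False this(2)] show False
        by simp
    qed
    then show ?thesis
      using False by auto
  qed
  then have "comp2 q P R (\<gamma> * e) 0
      = (\<Sum>i\<le>\<gamma> * e. \<Sum>j\<le>\<gamma> * e - i. if i = \<gamma> then if j = 0 then q \<gamma> 0 * P e ^ \<gamma> else 0 else 0)"
    unfolding comp2_def by simp
  also have "\<dots> = (\<Sum>i\<le>\<gamma> * e. if i = \<gamma> then q \<gamma> 0 * P e ^ \<gamma> else 0)"
    by (intro sum.cong refl) auto
  also have "\<dots> = q \<gamma> 0 * P e ^ \<gamma>"
    using pos(1) by simp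
  finally show ?thesis .
qed

lemma Qiter_step:
  fixes l :: real
  assumes p: "\<forall>a<\<delta>. p a = 0" "p \<delta> \<noteq> 0" "1 \<le> \<delta>"
    and q: "wl_gt_off_axis (real \<gamma> / real \<delta>) \<gamma> q"
    and Q: "wl_ge l (real (\<gamma> * \<delta> ^ k)) (Qiter p q (Suc k))"
  shows "wl_gt_off_axis l (\<gamma> * \<delta> ^ Suc k) (Qiter p q (Suc (Suc k)))"
    and "Qiter p q (Suc (Suc k)) (\<gamma> * \<delta> ^ Suc k) 0 = q \<gamma> 0 * piter p (Suc k) (\<delta> ^ Suc k) ^ \<gamma>"
proof -
  have P: "\<forall>a<\<delta> ^ Suc k. piter p (Suc k) a = 0"
    using piter_low_coeffs[OF p] by blast
  have pos: "0 < \<delta> ^ Suc k" "0 < \<delta>" and rel: "\<gamma> * \<delta> ^ Suc k = \<delta> * (\<gamma> * \<delta> ^ k)"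
    using p(3) by simp_all
  show "wl_gt_off_axis l (\<gamma> * \<delta> ^ Suc k) (Qiter p q (Suc (Suc k)))"
    using comp2_wl_gt_off_axis[OF q P Q pos rel] by simp
  show "Qiter p q (Suc (Suc k)) (\<gamma> * \<delta> ^ Suc k) 0 = q \<gamma> 0 * piter p (Suc k) (\<delta> ^ Suc k) ^ \<gamma>"
    using comp2_axis_coeff[OF q P Q pos rel] by simp
qed

lemma Qiter_wl:
  fixes l :: real
  assumes p: "\<forall>a<\<delta>. p a = 0" "p \<delta> \<noteq> 0" "1 \<le> \<delta>"
    and q: "wl_gt_off_axis (real \<gamma> / real \<delta>) \<gamma> q" "q \<gamma> 0 \<noteq> 0" "wl_ge l (real \<gamma>) q"
  shows "1 \<le> n \<Longrightarrow> wl_ge l (real (\<gamma> * \<delta> ^ (n - 1))) (Qiter p q n) \<and> Qiter p q n (\<gamma> * \<delta> ^ (n - 1)) 0 \<noteq> 0"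
    and "2 \<le> n \<Longrightarrow> wl_gt_off_axis l (\<gamma> * \<delta> ^ (n - 1)) (Qiter p q n)"
proof -
  have Q: "wl_ge l (real (\<gamma> * \<delta> ^ k)) (Qiter p q (Suc k)) \<and> Qiter p q (Suc k) (\<gamma> * \<delta> ^ k) 0 \<noteq> 0" for k
  proof (induction k)
    case 0
    then show ?case
      using q(2,3) Qiter_1[of p q] by simp
  next
    case (Suc k)
    note step = Qiter_step[OF p q(1) Suc[THEN conjunct1]]
    have "piter p (Suc k) (\<delta> ^ Suc k) \<noteq> 0"
      using piter_low_coeffs[OF p] by blast
    then show ?case
      using wl_gt_off_axis_imp_wl_ge[OF step(1)] step(2) q(2) by simp
  qed
  show "1 \<le> n \<Longrightarrow> wl_ge l (real (\<gamma> * \<delta> ^ (n - 1))) (Qiter p q n) \<and> Qiter p q n (\<gamma> * \<delta> ^ (n - 1)) 0 \<noteq> 0"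
    using Q[of "n - 1"] by (simp add: Suc_diff_le)
  show "wl_gt_off_axis l (\<gamma> * \<delta> ^ (n - 1)) (Qiter p q n)" if "2 \<le> n"
  proof -
    define k where "k = n - 2"
    then have "n = Suc (Suc k)"
      using that by simp
    then show ?thesis
      using Qiter_step(1)[OF p q(1) Q[of k, THEN conjunct1]] by simp
  qed
qed

section \<open>Extreme points cut out by supporting hyperplanes\<close>

lemma convex_halfspace_gt_Un:
  fixes a :: "'a::real_inner"
  assumes T: "convex T" "T \<subseteq> {x. a \<bullet> x = b}"
  shows "convex ({x. b < a \<bullet> x} \<union> T)"
proof (rule convexI)
  fix x y and u v :: real
  assume xy: "x \<in> {x. b < a \<bullet> x} \<union> T" "y \<in> {x. b < a \<bullet> x} \<union> T"
    and uv: "0 \<le> u" "0 \<le> v" "u + v = 1"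
  let ?z = "u *\<^sub>R x + v *\<^sub>R y"
  show "?z \<in> {x. b < a \<bullet> x} \<union> T"
  proof (cases "b < a \<bullet> ?z")
    case False
    have "b \<le> a \<bullet> x" "b \<le> a \<bullet> y"
      using xy T(2) by force+
    moreover have "u * (a \<bullet> x - b) + v * (a \<bullet> y - b) \<le> 0"
    proof -
      have "b = (u + v) * b" using uv(3) by simp
      then show ?thesis using False by (simp add: inner_add_right algebra_simps)
    qed
    ultimately have "u * (a \<bullet> x - b) = 0" "v * (a \<bullet> y - b) = 0"
      using uv by (smt (verit) mult_nonneg_nonneg)+
    then have "u = 0 \<or> x \<in> T" "v = 0 \<or> y \<in> T"
      using xy by auto
    then show ?thesis
      using uv convexD[OF T(1), of x y u v] by auto
  qed simp
qed

lemma convex_hull_Int_supporting_hyperplane: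
  fixes a :: "'a::real_inner"
  assumes ge: "\<And>x. x \<in> S \<Longrightarrow> b \<le> a \<bullet> x"
  shows "convex hull S \<inter> {x. a \<bullet> x = b} = convex hull (S \<inter> {x. a \<bullet> x = b})"
proof
  let ?H = "{x. a \<bullet> x = b}"
  have "convex hull (S \<inter> ?H) \<subseteq> ?H"
    by (intro hull_minimal convex_hyperplane) auto
  then have "convex ({x. b < a \<bullet> x} \<union> convex hull (S \<inter> ?H))"
    by (intro convex_halfspace_gt_Un convex_convex_hull)
  moreover have "S \<subseteq> {x. b < a \<bullet> x} \<union> convex hull (S \<inter> ?H)"
    using ge hull_inc[of _ "S \<inter> ?H"] by fastforce
  ultimately have "convex hull S \<subseteq> {x. b < a \<bullet> x} \<union> convex hull (S \<inter> ?H)"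
    by (rule hull_minimal[rotated])
  then show "convex hull S \<inter> ?H \<subseteq> convex hull (S \<inter> ?H)"
    by auto
  show "convex hull (S \<inter> ?H) \<subseteq> convex hull S \<inter> ?H"
    using \<open>convex hull (S \<inter> ?H) \<subseteq> ?H\<close> by (simp add: hull_mono)
qed

lemma extreme_point_of_convex_hull_lex:
  fixes a c p :: "'a::real_inner"
  assumes p: "p \<in> S" "a \<bullet> p = b" "c \<bullet> p = d"
    and ge: "\<And>x. x \<in> S \<Longrightarrow> b \<le> a \<bullet> x"
    and tie: "\<And>x. x \<in> S \<Longrightarrow> a \<bullet> x = b \<Longrightarrow> d \<le> c \<bullet> x"
    and unique: "\<And>x. a \<bullet> x = b \<Longrightarrow> c \<bullet> x = d \<Longrightarrow> x = p"
  shows "p extreme_point_of convex hull S"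
proof -
  let ?F = "convex hull S \<inter> {x. a \<bullet> x = b}"
  have "convex hull S \<subseteq> {x. b \<le> a \<bullet> x}"
    using ge by (intro hull_minimal convex_halfspace_ge) auto
  then have face: "?F face_of convex hull S"
    by (intro face_of_Int_supporting_hyperplane_ge convex_convex_hull) auto
  have "?F = convex hull (S \<inter> {x. a \<bullet> x = b})"
    using ge by (rule convex_hull_Int_supporting_hyperplane)
  also have "\<dots> \<subseteq> {x. d \<le> c \<bullet> x}"
    using tie by (intro hull_minimal convex_halfspace_ge) auto
  finally have "\<And>x. x \<in> ?F \<Longrightarrow> d \<le> c \<bullet> x" by auto
  moreover have "?F \<inter> {x. c \<bullet> x = d} = {p}"
    using p hull_inc[OF p(1)] unique by blast
  ultimately have "p extreme_point_of ?F"
    by (intro extreme_point_of_Int_supporting_hyperplane_ge)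
  then show ?thesis
    using face extreme_point_of_face by blast
qed

section \<open>Newton polygons\<close>

definition support_quadrants :: "ser2 \<Rightarrow> (real \<times> real) set" where
  "support_quadrants g = \<Union>{{(x, y). real i \<le> x \<and> real j \<le> y} | i j. g i j \<noteq> 0}"

lemma newton_eq_hull: "newton g = convex hull support_quadrants g"
  by (simp add: newton_def support_quadrants_def)

lemma mem_support_quadrants:
  "s \<in> support_quadrants g \<longleftrightarrow> (\<exists>i j. g i j \<noteq> 0 \<and> real i \<le> fst s \<and> real j \<le> snd s)"
  by (cases s) (auto simp: support_quadrants_def)

lemma newton_memI: "g i j \<noteq> 0 \<Longrightarrow> real i \<le> x \<Longrightarrow> real j \<le> y \<Longrightarrow> (x, y) \<in> newton g"
  unfolding newton_eq_hull by (rule hull_inc) (auto simp: mem_support_quadrants)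

lemma convex_newton: "convex (newton g)"
  by (simp add: newton_eq_hull)

lemma mem_newton_vertices: "v \<in> newton_vertices g \<longleftrightarrow> v extreme_point_of newton g"
  by (simp add: newton_vertices_def)

lemma newton_vertex_in_newton: "v \<in> newton_vertices g \<Longrightarrow> v \<in> newton g"
  by (simp add: mem_newton_vertices extreme_point_of_def)

lemma newton_add_nonneg:
  assumes "u \<in> newton g" "0 \<le> fst d" "0 \<le> snd d"
  shows "u + d \<in> newton g"
proof -
  have "support_quadrants g \<subseteq> (\<lambda>x. x - d) ` newton g"
  proof
    fix s assume "s \<in> support_quadrants g"
    then obtain i j where "g i j \<noteq> 0" "real i \<le> fst s" "real j \<le> snd s"
      by (auto simp: mem_support_quadrants)
    then have "(fst s + fst d, snd s + snd d) \<in> newton g"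
      using assms(2,3) by (intro newton_memI) auto
    then have "s + d \<in> newton g" by (simp add: plus_prod_def)
    then show "s \<in> (\<lambda>x. x - d) ` newton g"
      by (intro image_eqI[of _ _ "s + d"]) auto
  qed
  then have "newton g \<subseteq> (\<lambda>x. x - d) ` newton g"
    unfolding newton_eq_hull[of g]
    by (intro hull_minimal convex_translation_subtract) (simp_all add: newton_eq_hull[symmetric] convex_newton)
  then show ?thesis using assms(1) by auto
qed

lemma newton_dominated_not_vertex:
  assumes "u \<in> newton g" "fst u \<le> fst v" "snd u \<le> snd v" "u \<noteq> v"
  shows "v \<notin> newton_vertices g"
proof
  assume "v \<in> newton_vertices g"
  then have v: "v extreme_point_of newton g" "v \<in> newton g"
    by (simp_all add: mem_newton_vertices newton_vertex_in_newton)
  let ?w = "v + (v - u)"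
  have "?w \<in> newton g"
    using v(2) assms(2,3) by (intro newton_add_nonneg) auto
  moreover have "v \<in> open_segment u ?w"
  proof -
    have "v = midpoint u ?w" and "u \<noteq> ?w"
      using assms(4) by (auto simp: midpoint_def prod_eq_iff)
    then show ?thesis by (metis midpoint_in_open_segment)
  qed
  ultimately show False
    using v(1) assms(1) by (auto simp: extreme_point_of_def)
qed

lemma newton_vertex_support:
  assumes "v \<in> newton_vertices g"
  obtains i j where "v = (real i, real j)" "g i j \<noteq> 0"
proof -
  have "v \<in> support_quadrants g"
    using assms extreme_point_of_convex_hull by (simp add: mem_newton_vertices newton_eq_hull)
  then obtain i j where ij: "g i j \<noteq> 0" "real i \<le> fst v" "real j \<le> snd v"
    by (auto simp: mem_support_quadrants)
  then have "(real i, real j) \<in> newton g" by (intro newton_memI) auto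
  then have "v = (real i, real j)"
    using newton_dominated_not_vertex[of "(real i, real j)" g v] ij(2,3) assms by auto
  with ij that show ?thesis by blast
qed

lemma newton_vertex_coeff_nonzero: "(real i, real j) \<in> newton_vertices g \<Longrightarrow> g i j \<noteq> 0"
  by (metis newton_vertex_support of_nat_eq_iff prod.inject)

lemma newton_vertex_of_min_weight:
  fixes A B :: real
  assumes A: "0 \<le> A" and B: "0 < B" and nz: "g i0 j0 \<noteq> 0"
    and min: "\<And>i j. g i j \<noteq> 0 \<Longrightarrow> A * i0 + B * j0 \<le> A * i + B * j"
    and tie: "\<And>i j. g i j \<noteq> 0 \<Longrightarrow> A * i + B * j = A * i0 + B * j0 \<Longrightarrow> i0 \<le> i"
  shows "(real i0, real j0) \<in> newton_vertices g"
  unfolding mem_newton_vertices newton_eq_hull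
proof (rule extreme_point_of_convex_hull_lex[where a = "(A, B)" and c = "(1, 0)"])
  show "(real i0, real j0) \<in> support_quadrants g"
    using nz by (auto simp: mem_support_quadrants)
  have dominated: "A * i + B * j \<le> (A, B) \<bullet> s"
    if "real i \<le> fst s" "real j \<le> snd s" for s i j
    using that A B by (cases s) (auto intro!: add_mono mult_left_mono)
  fix s assume s: "s \<in> support_quadrants g"
  then obtain i j where ij: "g i j \<noteq> 0" "real i \<le> fst s" "real j \<le> snd s"
    by (auto simp: mem_support_quadrants)
  show "A * i0 + B * j0 \<le> (A, B) \<bullet> s"
    using min[OF ij(1)] dominated[OF ij(2,3)] by linarith
  assume "(A, B) \<bullet> s = A * i0 + B * j0"
  then have "A * i + B * j = A * i0 + B * j0"
    using min[OF ij(1)] dominated[OF ij(2,3)] by linarith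
  then show "real i0 \<le> (1, 0) \<bullet> s"
    using tie[OF ij(1)] ij(2) by (cases s) simp
next
  fix s :: "real \<times> real"
  assume "(A, B) \<bullet> s = A * i0 + B * j0" "(1, 0) \<bullet> s = real i0"
  then show "s = (real i0, real j0)"
    using B by (cases s) simp
qed simp_all

lemma newton_above_chord_not_vertex:
  assumes a: "a \<in> newton g" and b: "b \<in> newton g"
    and x: "fst a \<le> x" "x < fst b"
    and above: "(snd b - snd a) * (x - fst a) \<le> (y - snd a) * (fst b - fst a)"
    and ne: "(x, y) \<noteq> a"
  shows "(x, y) \<notin> newton_vertices g"
proof
  assume vertex: "(x, y) \<in> newton_vertices g"
  define t where "t = (x - fst a) / (fst b - fst a)"
  have t: "0 \<le> t" "t < 1"
    using x by (auto simp: t_def divide_simps)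
  define w where "w = (1 - t) *\<^sub>R a + t *\<^sub>R b"
  have w: "w \<in> newton g"
    unfolding w_def using t by (intro convexD_alt convex_newton a b) auto
  have "fst w = fst a + t * (fst b - fst a)"
    by (simp add: w_def algebra_simps)
  then have fst_w: "fst w = x"
    using x by (simp add: t_def)
  have "snd w = snd a + t * (snd b - snd a)"
    by (simp add: w_def algebra_simps)
  moreover have "t * (snd b - snd a) \<le> y - snd a"
    using x above by (simp add: t_def pos_divide_le_eq mult.commute)
  ultimately have snd_w: "snd w \<le> y" by simp
  show False
  proof (cases "w = (x, y)")
    case True
    then have "t \<noteq> 0"
      using ne by (auto simp: w_def)
    then have "(x, y) \<in> open_segment a b"
      unfolding in_segment using t x True[symmetric]
      by (auto simp: w_def intro!: exI[of _ t])
    then show False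
      using vertex a b by (auto simp: mem_newton_vertices extreme_point_of_def)
  next
    case False
    then show False
      using newton_dominated_not_vertex[OF w, of "(x, y)"] fst_w snd_w vertex by auto
  qed
qed

lemma newton_eq_quadrant:
  assumes nz: "g N 0 \<noteq> 0" and right: "\<And>i j. g i j \<noteq> 0 \<Longrightarrow> N \<le> i"
  shows "newton g = {(x, y). real N \<le> x \<and> 0 \<le> y}"
proof
  have quadrant: "{(x, y::real). real N \<le> x \<and> 0 \<le> y} = {real N..} \<times> {0::real..}"
    by auto
  have "convex {(x, y::real). real N \<le> x \<and> 0 \<le> y}"
    unfolding quadrant by (intro convex_Times convex_real_interval)
  moreover have "support_quadrants g \<subseteq> {(x, y). real N \<le> x \<and> 0 \<le> y}"
    using right by (force simp: mem_support_quadrants)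
  ultimately show "newton g \<subseteq> {(x, y). real N \<le> x \<and> 0 \<le> y}"
    unfolding newton_eq_hull by (rule hull_minimal[rotated])
  show "{(x, y). real N \<le> x \<and> 0 \<le> y} \<subseteq> newton g"
    using nz by (auto intro: newton_memI)
qed

lemma obtain_least_minimizer:
  fixes w :: "nat \<Rightarrow> nat \<Rightarrow> 'a::wellorder"
  assumes "P i j"
  obtains i0 j0 where "P i0 j0" "\<And>i j. P i j \<Longrightarrow> w i0 j0 \<le> w i j"
    "\<And>i j. P i j \<Longrightarrow> w i j = w i0 j0 \<Longrightarrow> i0 \<le> i"
proof -
  define k0 where "k0 = (LEAST k. \<exists>i j. P i j \<and> w i j = k)"
  have k0: "\<exists>i j. P i j \<and> w i j = k0"
    unfolding k0_def by (rule LeastI[of _ "w i j"]) (use assms in blast)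
  have k0_le: "k0 \<le> w i j" if "P i j" for i j
    unfolding k0_def by (rule Least_le) (use that in blast)
  define i0 where "i0 = (LEAST i. \<exists>j. P i j \<and> w i j = k0)"
  obtain j0 where j0: "P i0 j0" "w i0 j0 = k0"
    unfolding i0_def using LeastI_ex[of "\<lambda>i. \<exists>j. P i j \<and> w i j = k0"] k0 by blast
  have "i0 \<le> i" if "P i j" "w i j = k0" for i j
    unfolding i0_def by (rule Least_le) (use that in blast)
  with j0 k0_le show ?thesis
    by (intro that[of i0 j0]) auto
qed

lemma obtain_min_slope:
  fixes G :: ser2
  assumes "G i1 j1 \<noteq> 0" "i1 < N"
  obtains a0 b0 where "G a0 b0 \<noteq> 0" "a0 < N"
    "\<And>i j. G i j \<noteq> 0 \<Longrightarrow> i < N \<Longrightarrow> real b0 * (real N - i) \<le> real j * (real N - a0)"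
    "\<And>i j. G i j \<noteq> 0 \<Longrightarrow> i < N \<Longrightarrow> real b0 * (real N - i) = real j * (real N - a0) \<Longrightarrow> a0 \<le> i"
proof -
  \<comment> \<open>Scaling by N! turns the slope j / (N - i) into a natural number.\<close>
  define w where "w i j = j * (fact N div (N - i))" for i j :: nat
  have w: "real (w i j) = real (fact N) * (real j / (real N - i))" if "i < N" for i j
  proof -
    have "(N - i) dvd fact N"
      using that by (intro dvd_fact) auto
    then show ?thesis
      using that by (simp add: w_def real_of_nat_div of_nat_diff)
  qed
  have w_le: "w i j \<le> w i' j' \<longleftrightarrow> real j * (real N - i') \<le> real j' * (real N - i)"
    if "i < N" "i' < N" for i j i' j'
  proof -
    have "w i j \<le> w i' j' \<longleftrightarrow> real (w i j) \<le> real (w i' j')"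
      by (rule of_nat_le_iff[symmetric])
    also have "\<dots> \<longleftrightarrow> real (fact N) * (real j * (real N - i')) \<le> real (fact N) * (real j' * (real N - i))"
      using that by (simp add: w divide_simps ac_simps)
    finally show ?thesis
      by simp
  qed
  have w_eq: "w i j = w i' j' \<longleftrightarrow> real j * (real N - i') = real j' * (real N - i)"
    if "i < N" "i' < N" for i j i' j'
    using w_le[OF that] w_le[OF that(2,1)] by (auto simp: order_eq_iff)
  obtain a0 b0 where "G a0 b0 \<noteq> 0 \<and> a0 < N"
    "\<And>i j. G i j \<noteq> 0 \<and> i < N \<Longrightarrow> w a0 b0 \<le> w i j"
    "\<And>i j. G i j \<noteq> 0 \<and> i < N \<Longrightarrow> w i j = w a0 b0 \<Longrightarrow> a0 \<le> i"
    using obtain_least_minimizer[of "\<lambda>i j. G i j \<noteq> 0 \<and> i < N" i1 j1 w] assms by blast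
  then show ?thesis
    by (intro that[of a0 b0]) (auto simp: w_le w_eq)
qed

lemma newton_axis_vertex:
  fixes l :: real
  assumes l: "0 < l" and nz: "G N 0 \<noteq> 0" and off_axis: "wl_gt_off_axis l N G"
  shows "(real N, 0) \<in> newton_vertices G"
proof -
  have "(j = 0 \<and> N \<le> i) \<or> real N < real i + l * real j" if "G i j \<noteq> 0" for i j
    using off_axis that by (simp add: wl_gt_off_axis_def)
  then show ?thesis
    using newton_vertex_of_min_weight[of 1 l G N 0] l nz by force
qed

lemma newton_vertex_of_min_slope:
  assumes ab0: "G a0 b0 \<noteq> 0" "a0 < N"
    and below: "\<And>i j. G i j \<noteq> 0 \<Longrightarrow> i < N \<Longrightarrow> real b0 * (real N - i) \<le> real j * (real N - a0)"
    and tie: "\<And>i j. G i j \<noteq> 0 \<Longrightarrow> i < N \<Longrightarrow> real b0 * (real N - i) = real j * (real N - a0) \<Longrightarrow> a0 \<le> i"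
  shows "(real a0, real b0) \<in> newton_vertices G"
proof (rule newton_vertex_of_min_weight[where A = "real b0" and B = "real N - a0"])
  fix i j assume ij: "G i j \<noteq> 0"
  show "b0 * real a0 + (real N - a0) * b0 \<le> b0 * real i + (real N - a0) * j"
  proof (cases "i < N")
    case True
    then show ?thesis using below[OF ij] by (simp add: algebra_simps)
  next
    case False
    then have "real b0 * N \<le> b0 * i" "real a0 * j \<le> N * j"
      using ab0(2) by (simp_all add: mult_left_mono mult_right_mono)
    then show ?thesis by (simp add: algebra_simps)
  qed
  assume "b0 * real i + (real N - a0) * j = b0 * real a0 + (real N - a0) * b0"
  then show "a0 \<le> i"
    using tie[OF ij] ab0(2) by (cases "i < N") (auto simp: algebra_simps)
qed (use ab0 in auto)

lemma newton_steep_edge_at_axis_vertex: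
  fixes l :: real
  assumes l: "0 < l" and nz: "G N 0 \<noteq> 0" and off_axis: "wl_gt_off_axis l N G"
    and left: "G i1 j1 \<noteq> 0" "i1 < N"
  shows "\<exists>a b. (real N, 0) \<in> newton_vertices G \<and> (a, b) \<in> newton_vertices G \<and> a < real N
           \<and> (\<forall>v\<in>newton_vertices G. fst v < real N \<longrightarrow> fst v \<le> a) \<and> - b / (real N - a) < - 1 / l"
proof -
  obtain a0 b0 where ab0: "G a0 b0 \<noteq> 0" "a0 < N"
    and below: "\<And>i j. G i j \<noteq> 0 \<Longrightarrow> i < N \<Longrightarrow> real b0 * (real N - i) \<le> real j * (real N - a0)"
    and tie: "\<And>i j. G i j \<noteq> 0 \<Longrightarrow> i < N \<Longrightarrow> real b0 * (real N - i) = real j * (real N - a0) \<Longrightarrow> a0 \<le> i"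
    using obtain_min_slope[of G i1 j1 N] left by blast
  have axis_vertex: "(real N, 0) \<in> newton_vertices G"
    using newton_axis_vertex[OF l nz off_axis] .
  have edge_vertex: "(real a0, real b0) \<in> newton_vertices G"
    using newton_vertex_of_min_slope[of G a0 b0 N] ab0 below tie by blast
  have "fst v \<le> a0" if v: "v \<in> newton_vertices G" "fst v < real N" for v
  proof (rule ccontr)
    assume "\<not> fst v \<le> a0"
    obtain i j where ij: "v = (real i, real j)" "G i j \<noteq> 0"
      using newton_vertex_support[OF v(1)] .
    have "(real i, real j) \<notin> newton_vertices G"
      using below[of i j] ij v(2) \<open>\<not> fst v \<le> a0\<close>
      by (intro newton_above_chord_not_vertex[of "(real a0, real b0)" G "(real N, 0)"]
          newton_vertex_in_newton edge_vertex axis_vertex) (auto simp: algebra_simps)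
    then show False using ij v(1) by simp
  qed
  moreover have "- real b0 / (real N - a0) < - 1 / l"
  proof -
    have "(b0 = 0 \<and> N \<le> a0) \<or> real N < real a0 + l * real b0"
      using off_axis ab0(1) by (simp add: wl_gt_off_axis_def)
    then have "real N - a0 < l * b0"
      using ab0(2) by auto
    then show ?thesis
      using l ab0(2) by (simp add: field_simps)
  qed
  ultimately show ?thesis
    using axis_vertex edge_vertex ab0(2) by (intro exI[of _ "real a0"] exI[of _ "real b0"]) auto
qed

lemma newton_quadrant_or_steep_edge:
  fixes l :: real
  assumes l: "0 < l" and nz: "G N 0 \<noteq> 0" and off_axis: "wl_gt_off_axis l N G"
  shows "newton G = {(x, y). real N \<le> x \<and> 0 \<le> y} \<or>
         (\<exists>a b. (real N, 0) \<in> newton_vertices G \<and> (a, b) \<in> newton_vertices G \<and> a < real N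
           \<and> (\<forall>v\<in>newton_vertices G. fst v < real N \<longrightarrow> fst v \<le> a) \<and> - b / (real N - a) < - 1 / l)"
proof (cases "\<forall>i j. G i j \<noteq> 0 \<longrightarrow> N \<le> i")
  case True
  then show ?thesis
    using newton_eq_quadrant[of G N] nz by blast
next
  case False
  then obtain i1 j1 where "G i1 j1 \<noteq> 0" "i1 < N"
    by (auto simp: not_le)
  then show ?thesis
    using newton_steep_edge_at_axis_vertex[OF l nz off_axis] by blast
qed

section \<open>The last edge of the Newton polygon of q\<close>

lemma newton_vertex_height_pos:
  assumes "(real \<gamma>, 0) \<in> newton_vertices q" "(real n', real m') \<in> newton_vertices q" "n' < \<gamma>"
  shows "0 < m'"
proof (rule ccontr)
  assume "\<not> 0 < m'"
  then have "(real n', 0) \<in> newton q"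
    using newton_vertex_in_newton[OF assms(2)] by simp
  then show False
    using newton_dominated_not_vertex[of "(real n', 0)" q "(real \<gamma>, 0)"] assms by auto
qed

lemma support_above_last_edge:
  assumes last: "(real \<gamma>, 0) \<in> newton_vertices q" "\<forall>v\<in>newton_vertices q. fst v \<le> real \<gamma>"
    and prev: "(real n', real m') \<in> newton_vertices q" "n' < \<gamma>"
      "\<forall>v\<in>newton_vertices q. fst v < real \<gamma> \<longrightarrow> fst v \<le> real n'"
    and ij: "q i j \<noteq> 0"
  shows "real m' * \<gamma> \<le> real m' * i + (real \<gamma> - n') * j"
proof (rule ccontr)
  assume below: "\<not> ?thesis"
  define w where "w i j = m' * i + (\<gamma> - n') * j" for i j :: nat
  have w: "real (w i j) = real m' * i + (real \<gamma> - n') * j" for i j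
    using prev(2) by (simp add: w_def of_nat_diff)
  obtain i0 j0 where min: "q i0 j0 \<noteq> 0" "\<And>i j. q i j \<noteq> 0 \<Longrightarrow> w i0 j0 \<le> w i j"
    "\<And>i j. q i j \<noteq> 0 \<Longrightarrow> w i j = w i0 j0 \<Longrightarrow> i0 \<le> i"
    using obtain_least_minimizer[of "\<lambda>i j. q i j \<noteq> 0" i j w] ij by blast
  have vertex: "(real i0, real j0) \<in> newton_vertices q"
    by (rule newton_vertex_of_min_weight[where A = m' and B = "real \<gamma> - n'"])
      (use min prev(2) in \<open>auto simp: w[symmetric]\<close>)
  have low: "real m' * i0 + (real \<gamma> - n') * j0 < real m' * \<gamma>"
    using min(2)[OF ij] below by (simp add: w[symmetric])
  have "i0 \<le> n'"
  proof -
    have "i0 \<le> \<gamma>"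
      using last(2) vertex by fastforce
    moreover have "0 \<le> (real \<gamma> - n') * j0"
      using prev(2) by simp
    then have "i0 \<noteq> \<gamma>"
      using low by auto
    ultimately show ?thesis
      using prev(3) vertex by fastforce
  qed
  have "(real n', real m') \<noteq> (real i0, real j0)"
    using low by (auto simp: algebra_simps)
  then have "(real n', real m') \<notin> newton_vertices q"
    using \<open>i0 \<le> n'\<close> prev(2) low
    by (intro newton_above_chord_not_vertex[of "(real i0, real j0)" q "(real \<gamma>, 0)"]
        newton_vertex_in_newton vertex last(1)) (auto simp: algebra_simps)
  then show False
    using prev(1) by simp
qed

lemma wl_ge_of_supporting_line:
  assumes m': "0 < m'"
    and line: "\<And>i j. q i j \<noteq> 0 \<Longrightarrow> real m' * \<gamma> \<le> real m' * real i + B * real j"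
  shows "wl_ge (B / real m') (real \<gamma>) q"
  unfolding wl_ge_def
proof (intro allI impI)
  fix a b assume "q a b \<noteq> 0"
  then have "real m' * \<gamma> \<le> real m' * (real a + B / real m' * real b)"
    using line m' by (simp add: algebra_simps)
  then show "real \<gamma> \<le> real a + B / real m' * real b"
    using m' by simp
qed

lemma wl_gt_off_axis_of_steep_edge:
  fixes \<gamma> \<delta> n' m' :: nat
  assumes m': "0 < m'" and n': "n' < \<gamma>" and \<delta>: "1 \<le> \<delta>"
    and edge: "\<And>i j. q i j \<noteq> 0 \<Longrightarrow> real m' * \<gamma> \<le> real m' * real i + (real \<gamma> - n') * real j"
    and T: "real \<delta> < real m' + real n' * real m' / (real \<gamma> - real n')"
  shows "wl_gt_off_axis (real \<gamma> / real \<delta>) \<gamma> q"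
  unfolding wl_gt_off_axis_def
proof (intro allI impI)
  fix i j assume ij: "q i j \<noteq> 0"
  have \<gamma>_n': "0 < real \<gamma> - n'"
    using n' by simp
  have steep: "real \<delta> * (real \<gamma> - n') < real m' * \<gamma>"
    using T \<gamma>_n' by (simp add: field_simps)
  have "real \<delta> * (real \<gamma> - i) < real \<gamma> * j" if "i < \<gamma>"
  proof -
    have "(real \<gamma> - n') * (real \<delta> * (real \<gamma> - i)) < (real m' * \<gamma>) * (real \<gamma> - i)"
      using steep that by (simp add: mult_strict_right_mono ac_simps)
    also have "\<dots> \<le> real \<gamma> * ((real \<gamma> - n') * j)"
    proof -
      have "real m' * (real \<gamma> - i) \<le> (real \<gamma> - n') * j"
        using edge[OF ij] by (simp add: algebra_simps)
      then show ?thesis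
        by (simp add: mult_left_mono ac_simps)
    qed
    finally show ?thesis
      using \<gamma>_n' by (simp add: ac_simps)
  qed
  then have "real \<gamma> < real i + real \<gamma> / real \<delta> * real j" if "i < \<gamma>"
    using that \<delta> by (simp add: field_simps)
  moreover have "0 < real \<gamma> / real \<delta> * real j" if "j \<noteq> 0"
    using that n' \<delta> by simp
  ultimately show "(j = 0 \<and> \<gamma> \<le> i) \<or> real \<gamma> < real i + real \<gamma> / real \<delta> * real j"
    by (cases "i < \<gamma>"; cases "j = 0") auto
qed

theorem mainTheorem6:
  fixes p :: ser1 and q :: ser2 and \<delta> \<gamma> d n' m' :: nat
  assumes p_conv: "convergent1 p"
    and q_conv: "convergent2 q"
    and p0: "p 0 = 0"
    and q00: "q 0 0 = 0"
    and q_nz: "\<exists>i j. q i j \<noteq> 0"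
    and delta_ge: "\<delta> \<ge> 1"
    and delta_lead: "p \<delta> \<noteq> 0"
    and delta_low: "\<forall>k<\<delta>. p k = 0"
    \<comment> \<open>(gamma, d) = (n_s, m_s): the vertex of N(q) with largest first coordinate\<close>
    and last_vertex: "(real \<gamma>, real d) \<in> newton_vertices q"
    and last_max: "\<forall>v\<in>newton_vertices q. fst v \<le> real \<gamma>"
    \<comment> \<open>(n', m') = (n_{s-1}, m_{s-1}); its existence means s > 1\<close>
    and prev_vertex: "(real n', real m') \<in> newton_vertices q"
    and prev_lt: "n' < \<gamma>"
    and prev_max: "\<forall>v\<in>newton_vertices q. fst v < real \<gamma> \<longrightarrow> fst v \<le> real n'"
    \<comment> \<open>Case 2 with strict inequality delta < T_{s-1}; d = 0\<close>
    and d0: "d = 0"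
    and delta_lt_T: "real \<delta> < real m' + real n' * (real m' - real d) / (real \<gamma> - real n')"
  shows "(\<forall>n\<ge>1. Qiter p q n (\<gamma> * \<delta> ^ (n - 1)) 0 \<noteq> 0 \<and>
            (\<forall>l\<in>{(real \<gamma> - real n') / (real m' - real d) .. real \<gamma> / (real \<delta> - real d)}.
               wl l (Qiter p q n) = real (\<gamma> * \<delta> ^ (n - 1))))
       \<and> (\<forall>n\<ge>2. newton (Qiter p q n) = {(x, y). real (\<gamma> * \<delta> ^ (n - 1)) \<le> x \<and> 0 \<le> y}
            \<or> (\<exists>a b. (real (\<gamma> * \<delta> ^ (n - 1)), 0) \<in> newton_vertices (Qiter p q n)
                 \<and> (a, b) \<in> newton_vertices (Qiter p q n)
                 \<and> a < real (\<gamma> * \<delta> ^ (n - 1))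
                 \<and> (\<forall>v\<in>newton_vertices (Qiter p q n).
                      fst v < real (\<gamma> * \<delta> ^ (n - 1)) \<longrightarrow> fst v \<le> a)
                 \<and> - b / (real (\<gamma> * \<delta> ^ (n - 1)) - a)
                     < - 1 / ((real \<gamma> - real n') / (real m' - real d))))"
proof -
  have last: "(real \<gamma>, 0) \<in> newton_vertices q"
    using last_vertex d0 by simp
  have m': "0 < m'"
    using newton_vertex_height_pos[OF last prev_vertex prev_lt] .
  note edge = support_above_last_edge[OF last last_max prev_vertex prev_lt prev_max]
  have l1: "(real \<gamma> - real n') / (real m' - real d) = (real \<gamma> - n') / m'" "0 < (real \<gamma> - n') / m'"
    using d0 m' prev_lt by simp_all
  have q_axis: "q \<gamma> 0 \<noteq> 0"
    using newton_vertex_coeff_nonzero[of \<gamma> 0] last by simp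
  have T: "real \<delta> < real m' + real n' * real m' / (real \<gamma> - real n')"
    using delta_lt_T d0 by simp
  have q_off_axis: "wl_gt_off_axis (real \<gamma> / real \<delta>) \<gamma> q"
    by (rule wl_gt_off_axis_of_steep_edge[OF m' prev_lt delta_ge _ T]) (rule edge)
  have q_wl: "wl_ge ((real \<gamma> - n') / m') (real \<gamma>) q"
    by (rule wl_ge_of_supporting_line[OF m']) (rule edge)
  note Q = Qiter_wl[OF delta_low delta_lead delta_ge q_off_axis q_axis q_wl]
  show ?thesis
    unfolding l1(1)
  proof (intro conjI allI impI ballI)
    fix n :: nat assume "1 \<le> n"
    then show "Qiter p q n (\<gamma> * \<delta> ^ (n - 1)) 0 \<noteq> 0"
      using Q(1) by blast
  next
    fix n :: nat and l assume n: "1 \<le> n" and "l \<in> {(real \<gamma> - n') / m' .. real \<gamma> / (real \<delta> - real d)}"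
    then have "wl_ge l (real (\<gamma> * \<delta> ^ (n - 1))) (Qiter p q n)"
      using wl_ge_mono[OF Q(1)[OF n, THEN conjunct1]] by simp
    then show "wl l (Qiter p q n) = real (\<gamma> * \<delta> ^ (n - 1))"
      using wl_eq_of_axis_coeff Q(1)[OF n] by blast
  qed (rule newton_quadrant_or_steep_edge[OF l1(2)]; use Q in simp)
qed

end
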